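(* Let $n,m,\ell\in\mathbb{N}_0$, let $U_{\mathrm{pos}}\subset\mathbb{R}^n$ be open, let $A:U_{\mathrm{pos}}\to\mathbb{R}^{\ell\times n}$ and $B:U_{\mathrm{pos}}\to\mathbb{R}^{n\times m}$ be continuous, and assume that $A$ has constant rank on $U_{\mathrm{pos}}$. For $\bm{r}\in U_{\mathrm{pos}}$ let $\mathcal{D}_{\bm{r}}\subset\mathbb{R}^{3n+m}\times\mathbb{R}^{3n+m}$ be the set of all pairs of a flow $f=(\bm{v}_{\mathcal{L},f},\bm{F}_{\mathcal{L},f},\bm{v}_{\mathcal{R}},\bm{v}_{\mathrm{ext}})\in\mathbb{R}^n\times\mathbb{R}^n\times\mathbb{R}^n\times\mathbb{R}^m$ and an effort $e=(\bm{F}_{\mathcal{L},e},\bm{v}_{\mathcal{L},e},\bm{F}_{\mathcal{R}},\bm{F}_{\mathrm{ext}})\in\mathbb{R}^n\times\mathbb{R}^n\times\mathbb{R}^n\times\mathbb{R}^m$ such that $\bm{v}_{\mathcal{L},f}=\bm{v}_{\mathcal{L},e}=\bm{v}_{\mathcal{R}}$, $A(\bm{r})\bm{v}_{\mathcal{L},e}=0$, $\bm{v}_{\mathrm{ext}}=B(\bm{r})^\top\bm{v}_{\mathcal{L},e}$, and there exists $\bm{\mu}\in\mathbb{R}^\ell$ with $\bm{F}_{\mathcal{L},f}+\bm{F}_{\mathcal{L},e}+\bm{F}_{\mathcal{R}}+B(\bm{r})\bm{F}_{\mathrm{ext}}+A(\bm{r})^\top\bm{\mu}=0$. Then the family $(\mathcal{D}_{\bm{r}})_{\bm{r}\in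 U_{\mathrm{pos}}}$ is a modulated Dirac structure.
   Context: A subspace $\mathcal{D}\subset\mathbb{R}^N\times\mathbb{R}^N$ is a Dirac structure if for all $f,e\in\mathbb{R}^N$: $(f,e)\in\mathcal{D}$ if and only if $\hat f^\top e+f^\top\hat e=0$ for all $(\hat f,\hat e)\in\mathcal{D}$. For $U\subset\mathbb{R}^k$ open, a family $(\mathcal{D}_x)_{x\in U}$ of subspaces of $\mathbb{R}^N\times\mathbb{R}^N$ is a modulated Dirac structure if for every $x\in U$: (a) $\mathcal{D}_x$ is a Dirac structure, and (b) there exist a neighborhood $U_x\subset U$ of $x$ and a family $(T_y)_{y\in U_x}$ of linear bijective maps $T_y:\mathbb{R}^N\to\mathcal{D}_y$ such that for every $z\in\mathbb{R}^N$ the map $y\mapsto T_yz$ from $U_x$ to $\mathbb{R}^N\times\mathbb{R}^N$ is continuous. *)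

theory Defs
  imports "HOL-Analysis.Analysis" "HOL-Library.Function_Algebras"
begin

text \<open>A vector of R^N is a function nat => real vanishing at all
indices >= N; a (nr x nc)-matrix is a function nat => nat => real, of which
only the entries M i j with i < nr, j < nc are used. Topologies: the product
topology on nat => real (Function_Topology), restricted to R^N; on R^N this is
the Euclidean topology.\<close>

definition rvec :: "nat \<Rightarrow> (nat \<Rightarrow> real) set" where
  "rvec N = {x. \<forall>i\<ge>N. x i = 0}"

definition ip :: "nat \<Rightarrow> (nat \<Rightarrow> real) \<Rightarrow> (nat \<Rightarrow> real) \<Rightarrow> real" where
  "ip N x y = (\<Sum>i<N. x i * y i)"

definition mv :: "nat \<Rightarrow> nat \<Rightarrow> (nat \<Rightarrow> nat \<Rightarrow> real) \<Rightarrow> (nat \<Rightarrow> real) \<Rightarrow> (nat \<Rightarrow> real)" where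
  "mv nr nc M x = (\<lambda>i. if i < nr then (\<Sum>j<nc. M i j * x j) else 0)"

definition mtrans :: "(nat \<Rightarrow> nat \<Rightarrow> real) \<Rightarrow> (nat \<Rightarrow> nat \<Rightarrow> real)" where
  "mtrans M = (\<lambda>i j. M j i)"

definition fscale :: "real \<Rightarrow> (nat \<Rightarrow> real) \<Rightarrow> (nat \<Rightarrow> real)" where
  "fscale c x = (\<lambda>i. c * x i)"

definition mat_rank :: "nat \<Rightarrow> nat \<Rightarrow> (nat \<Rightarrow> nat \<Rightarrow> real) \<Rightarrow> nat" where
  "mat_rank nr nc M =
     vector_space.dim fscale ((\<lambda>j. \<lambda>i. if i < nr then M i j else 0) ` {..<nc})"

definition blk :: "nat \<Rightarrow> nat \<Rightarrow> (nat \<Rightarrow> real) \<Rightarrow> (nat \<Rightarrow> real)" where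
  "blk off len x = (\<lambda>i. if i < len then x (off + i) else 0)"

definition dirac :: "nat \<Rightarrow> ((nat \<Rightarrow> real) \<times> (nat \<Rightarrow> real)) set \<Rightarrow> bool" where
  "dirac N D \<longleftrightarrow>
     D \<subseteq> rvec N \<times> rvec N \<and>
     (0, 0) \<in> D \<and>
     (\<forall>(f, e)\<in>D. \<forall>(f', e')\<in>D. (\<lambda>i. f i + f' i, \<lambda>i. e i + e' i) \<in> D) \<and>
     (\<forall>(f, e)\<in>D. \<forall>c::real. (\<lambda>i. c * f i, \<lambda>i. c * e i) \<in> D) \<and>
     (\<forall>f\<in>rvec N. \<forall>e\<in>rvec N.
        (f, e) \<in> D \<longleftrightarrow> (\<forall>(fh, eh)\<in>D. ip N fh e + ip N f eh = 0))"

definition lin_bij_onto :: "nat \<Rightarrow> ((nat \<Rightarrow> real) \<Rightarrow> (nat \<Rightarrow> real) \<times> (nat \<Rightarrow> real))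
     \<Rightarrow> ((nat \<Rightarrow> real) \<times> (nat \<Rightarrow> real)) set \<Rightarrow> bool" where
  "lin_bij_onto N T D \<longleftrightarrow>
     (\<forall>x\<in>rvec N. \<forall>y\<in>rvec N. T (\<lambda>i. x i + y i) =
        (\<lambda>i. fst (T x) i + fst (T y) i, \<lambda>i. snd (T x) i + snd (T y) i)) \<and>
     (\<forall>x\<in>rvec N. \<forall>c::real. T (\<lambda>i. c * x i) =
        (\<lambda>i. c * fst (T x) i, \<lambda>i. c * snd (T x) i)) \<and>
     bij_betw T (rvec N) D"

definition modulated_dirac :: "nat \<Rightarrow> nat \<Rightarrow> (nat \<Rightarrow> real) set
     \<Rightarrow> ((nat \<Rightarrow> real) \<Rightarrow> ((nat \<Rightarrow> real) \<times> (nat \<Rightarrow> real)) set) \<Rightarrow> bool" where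
  "modulated_dirac k N U D \<longleftrightarrow>
     (\<forall>x\<in>U. dirac N (D x) \<and>
        (\<exists>Ux T. openin (top_of_set (rvec k)) Ux \<and> x \<in> Ux \<and> Ux \<subseteq> U \<and>
           (\<forall>y\<in>Ux. lin_bij_onto N (T y) (D y)) \<and>
           (\<forall>z\<in>rvec N. continuous_on Ux (\<lambda>y. T y z))))"

definition Dpos :: "nat \<Rightarrow> nat \<Rightarrow> nat \<Rightarrow> ((nat \<Rightarrow> real) \<Rightarrow> nat \<Rightarrow> nat \<Rightarrow> real)
     \<Rightarrow> ((nat \<Rightarrow> real) \<Rightarrow> nat \<Rightarrow> nat \<Rightarrow> real) \<Rightarrow> (nat \<Rightarrow> real)
     \<Rightarrow> ((nat \<Rightarrow> real) \<times> (nat \<Rightarrow> real)) set" where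
  "Dpos n m l A B r = {(f, e). f \<in> rvec (3*n+m) \<and> e \<in> rvec (3*n+m) \<and>
     (let vLf = blk 0 n f; FLf = blk n n f; vR = blk (2*n) n f; vext = blk (3*n) m f;
          FLe = blk 0 n e; vLe = blk n n e; FR = blk (2*n) n e; Fext = blk (3*n) m e
      in vLf = vLe \<and> vLe = vR \<and>
         mv l n (A r) vLe = (\<lambda>_. 0) \<and>
         vext = mv m n (mtrans (B r)) vLe \<and>
         (\<exists>\<mu>\<in>rvec l. (\<lambda>i. FLf i + FLe i + FR i + mv n m (B r) Fext i
                             + mv n l (mtrans (A r)) \<mu> i) = (\<lambda>_. 0)))}"

end

theory Submission
  imports Defs "Jordan_Normal_Form.Determinant"
begin

text \<open>Isotropy of \<open>D\<^sub>r\<close> follows from the adjointness of \<open>A, B\<close> and their transposes: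
  a velocity \<open>v \<in> ker A\<close> does no work against a constraint force \<open>A\<^sup>T \<mu>\<close>. Pairing
  with suitable elements of \<open>D\<^sub>r\<close> reduces maximality to the identity
  \<open>(ker A)\<^sup>\<bottom> = range A\<^sup>T\<close>.

  For the local parametrization near \<open>r\<^sub>0\<close>, choose columns of \<open>A(r\<^sub>0)\<close> forming a
  basis of its column space. Their Gram determinant stays nonzero near \<open>r\<^sub>0\<close>, so these
  columns stay independent and, the rank being constant, remain a basis; the coordinates
  \<open>C(r) = G(r)\<^sup>-\<^sup>1 A\<^sub>J(r)\<^sup>T A(r)\<close> of all columns in this basis depend
  continuously on \<open>r\<close>. The coordinates outside the basis then parametrize \<open>ker A(r)\<close>, the
  basic ones parametrize \<open>range A(r)\<^sup>T\<close>, and together with the remaining blocks this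
  yields \<open>T\<^sub>r\<close>.\<close>

section \<open>Vectors and block decomposition\<close>

lemma rvec_zero: "(\<lambda>_. 0) \<in> rvec N"
  and rvec_add: "x \<in> rvec N \<Longrightarrow> y \<in> rvec N \<Longrightarrow> (\<lambda>i. x i + y i) \<in> rvec N"
  and rvec_diff: "x \<in> rvec N \<Longrightarrow> y \<in> rvec N \<Longrightarrow> (\<lambda>i. x i - y i) \<in> rvec N"
  and rvec_uminus: "x \<in> rvec N \<Longrightarrow> (\<lambda>i. - x i) \<in> rvec N"
  and rvec_scale: "x \<in> rvec N \<Longrightarrow> (\<lambda>i. c * x i) \<in> rvec N"
  and mv_in_rvec: "mv nr nc M x \<in> rvec nr"
  and blk_in_rvec: "blk off len x \<in> rvec len"
  by (auto simp: rvec_def mv_def blk_def)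

lemmas rvec_closed = rvec_zero rvec_add rvec_diff rvec_uminus rvec_scale mv_in_rvec blk_in_rvec

lemma mv_zero: "mv nr nc M (\<lambda>_. 0) = (\<lambda>_. 0)"
  and mv_add: "mv nr nc M (\<lambda>i. x i + y i) = (\<lambda>i. mv nr nc M x i + mv nr nc M y i)"
  and mv_scale: "mv nr nc M (\<lambda>i. c * x i) = (\<lambda>i. c * mv nr nc M x i)"
  and mv_uminus: "mv nr nc M (\<lambda>i. - x i) = (\<lambda>i. - mv nr nc M x i)"
  by (auto simp: mv_def fun_eq_iff sum.distrib sum_distrib_left sum_negf algebra_simps)

lemma ip_commute: "ip N x y = ip N y x"
  by (simp add: ip_def mult.commute)

lemma ip_zero_left [simp]: "ip N (\<lambda>_. 0) x = 0"
  and ip_zero_right [simp]: "ip N x (\<lambda>_. 0) = 0"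
  and ip_add_left: "ip N (\<lambda>i. x i + y i) z = ip N x z + ip N y z"
  and ip_add_right: "ip N x (\<lambda>i. y i + z i) = ip N x y + ip N x z"
  and ip_diff_left: "ip N (\<lambda>i. x i - y i) z = ip N x z - ip N y z"
  and ip_diff_right: "ip N x (\<lambda>i. y i - z i) = ip N x y - ip N x z"
  and ip_uminus_left: "ip N (\<lambda>i. - x i) y = - ip N x y"
  and ip_uminus_right: "ip N x (\<lambda>i. - y i) = - ip N x y"
  by (simp_all add: ip_def algebra_simps sum.distrib sum_subtractf sum_negf)

lemma ip_mv_mtrans: "ip nc (mv nc nr (mtrans M) v) x = ip nr v (mv nr nc M x)"
  unfolding ip_def mv_def mtrans_def
  by (simp add: sum_distrib_left sum_distrib_right mult_ac sum.swap[of _ "{..<nc}"])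

lemma ip_self_eq_0:
  assumes "x \<in> rvec N" "ip N x x = 0"
  shows "x = (\<lambda>_. 0)"
proof
  have sq: "x i * x i = 0" if "i < N" for i
    using assms(2) that unfolding ip_def by (subst (asm) sum_nonneg_eq_0_iff) auto
  show "x i = 0" for i
    using sq[of i] assms(1) by (cases "i < N") (auto simp: rvec_def)
qed

lemma rvec_eqI_ip:
  assumes "x \<in> rvec N" "y \<in> rvec N" "\<And>z. z \<in> rvec N \<Longrightarrow> ip N z x = ip N z y"
  shows "x = y"
proof -
  let ?d = "\<lambda>i. x i - y i"
  have "ip N ?d ?d = 0"
    using assms by (simp add: ip_diff_right rvec_diff)
  then have "?d = (\<lambda>_. 0)"
    using assms by (intro ip_self_eq_0) (auto intro: rvec_diff)
  then show ?thesis
    by (auto simp: fun_eq_iff dest: fun_cong)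
qed

definition cat4 :: "nat \<Rightarrow> nat \<Rightarrow> (nat \<Rightarrow> real) \<Rightarrow> (nat \<Rightarrow> real) \<Rightarrow> (nat \<Rightarrow> real) \<Rightarrow> (nat \<Rightarrow> real)
    \<Rightarrow> nat \<Rightarrow> real" where
  "cat4 n m a b c d = (\<lambda>i. if i < n then a i else if i < 2*n then b (i - n)
     else if i < 3*n then c (i - 2*n) else if i < 3*n+m then d (i - 3*n) else 0)"

lemma cat4_in_rvec: "cat4 n m a b c d \<in> rvec (3*n+m)"
  by (auto simp: rvec_def cat4_def)

lemma blk_cat4:
  assumes "a \<in> rvec n" "b \<in> rvec n" "c \<in> rvec n" "d \<in> rvec m"
  shows "blk 0 n (cat4 n m a b c d) = a" "blk n n (cat4 n m a b c d) = b"
    "blk (2*n) n (cat4 n m a b c d) = c" "blk (3*n) m (cat4 n m a b c d) = d"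
  using assms by (auto simp: fun_eq_iff blk_def cat4_def rvec_def)

lemma cat4_blk:
  assumes "f \<in> rvec (3*n+m)"
  shows "cat4 n m (blk 0 n f) (blk n n f) (blk (2*n) n f) (blk (3*n) m f) = f"
  using assms by (auto simp: fun_eq_iff blk_def cat4_def rvec_def)

lemma cat4_eq_iff:
  assumes "a \<in> rvec n" "b \<in> rvec n" "c \<in> rvec n" "d \<in> rvec m"
    "a' \<in> rvec n" "b' \<in> rvec n" "c' \<in> rvec n" "d' \<in> rvec m"
  shows "cat4 n m a b c d = cat4 n m a' b' c' d' \<longleftrightarrow> a = a' \<and> b = b' \<and> c = c' \<and> d = d'"
  using blk_cat4[of a n b c d m] blk_cat4[of a' n b' c' d' m] assms by metis

lemma cat4_lincomb:
  "(\<lambda>i. s * cat4 n m a b c d i + t * cat4 n m a' b' c' d' i)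
     = cat4 n m (\<lambda>i. s * a i + t * a' i) (\<lambda>i. s * b i + t * b' i) (\<lambda>i. s * c i + t * c' i)
         (\<lambda>i. s * d i + t * d' i)"
  by (auto simp: cat4_def fun_eq_iff)

lemma sum_lessThan_add: "(\<Sum>i<a+b. f i) = (\<Sum>i<a. f i) + (\<Sum>i<b. f (a+i))"
  for f :: "nat \<Rightarrow> 'a::comm_monoid_add"
  by (induction b) (auto simp: add.assoc)

lemma ip_blk:
  "ip (3*n+m) f e = ip n (blk 0 n f) (blk 0 n e) + ip n (blk n n f) (blk n n e)
     + ip n (blk (2*n) n f) (blk (2*n) n e) + ip m (blk (3*n) m f) (blk (3*n) m e)"
proof -
  have N: "3*n+m = n + (n + (n + m))" by simp
  show ?thesis
    unfolding ip_def N sum_lessThan_add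
    by (simp add: blk_def add.assoc mult_2 mult_2_right numeral_3_eq_3 algebra_simps)
qed

lemma ip_cat4:
  "ip (3*n+m) (cat4 n m a b c d) (cat4 n m a' b' c' d')
     = ip n a a' + ip n b b' + ip n c c' + ip m d d'"
proof -
  have "ip n (blk 0 n (cat4 n m a b c d)) (blk 0 n (cat4 n m a' b' c' d')) = ip n a a'"
    "ip n (blk n n (cat4 n m a b c d)) (blk n n (cat4 n m a' b' c' d')) = ip n b b'"
    "ip n (blk (2*n) n (cat4 n m a b c d)) (blk (2*n) n (cat4 n m a' b' c' d')) = ip n c c'"
    "ip m (blk (3*n) m (cat4 n m a b c d)) (blk (3*n) m (cat4 n m a' b' c' d')) = ip m d d'"
    by (simp_all add: ip_def blk_def cat4_def)
  then show ?thesis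
    by (simp add: ip_blk)
qed

lemma blk_add: "blk off len (\<lambda>i. x i + y i) = (\<lambda>i. blk off len x i + blk off len y i)"
  and blk_scale: "blk off len (\<lambda>i. c * x i) = (\<lambda>i. c * blk off len x i)"
  by (auto simp: blk_def fun_eq_iff)

lemma cat4_cases:
  assumes "f \<in> rvec (3*n+m)"
  obtains a b c d where "a \<in> rvec n" "b \<in> rvec n" "c \<in> rvec n" "d \<in> rvec m"
    "f = cat4 n m a b c d"
  using cat4_blk[OF assms] blk_in_rvec by metis

section \<open>The Dirac structure at a fixed point\<close>

lemma cat4_in_Dpos:
  assumes "v \<in> rvec n" "F \<in> rvec n" "FL \<in> rvec n" "FR \<in> rvec n" "Fext \<in> rvec m" "\<mu> \<in> rvec l"
    and "mv l n (A r) v = (\<lambda>_. 0)"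
    and "(\<lambda>i. F i + FL i + FR i + mv n m (B r) Fext i + mv n l (mtrans (A r)) \<mu> i) = (\<lambda>_. 0)"
  shows "(cat4 n m v F v (mv m n (mtrans (B r)) v), cat4 n m FL v FR Fext) \<in> Dpos n m l A B r"
  using assms by (auto simp: Dpos_def Let_def blk_cat4 cat4_in_rvec mv_in_rvec)

lemma DposE:
  assumes "(f, e) \<in> Dpos n m l A B r"
  obtains v F FL FR Fext \<mu>
  where "v \<in> rvec n" "F \<in> rvec n" "FL \<in> rvec n" "FR \<in> rvec n" "Fext \<in> rvec m" "\<mu> \<in> rvec l"
    and "mv l n (A r) v = (\<lambda>_. 0)"
    and "(\<lambda>i. F i + FL i + FR i + mv n m (B r) Fext i + mv n l (mtrans (A r)) \<mu> i) = (\<lambda>_. 0)"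
    and "f = cat4 n m v F v (mv m n (mtrans (B r)) v)" "e = cat4 n m FL v FR Fext"
proof -
  let ?v = "blk n n e"
  from assms have f: "f \<in> rvec (3*n+m)" and e: "e \<in> rvec (3*n+m)"
    and flow: "blk 0 n f = ?v" "blk (2*n) n f = ?v" "blk (3*n) m f = mv m n (mtrans (B r)) ?v"
    and ker: "mv l n (A r) ?v = (\<lambda>_. 0)"
    and "\<exists>\<mu>\<in>rvec l. (\<lambda>i. blk n n f i + blk 0 n e i + blk (2*n) n e i
           + mv n m (B r) (blk (3*n) m e) i + mv n l (mtrans (A r)) \<mu> i) = (\<lambda>_. 0)"
    by (auto simp: Dpos_def Let_def)
  then obtain \<mu> where "\<mu> \<in> rvec l" "(\<lambda>i. blk n n f i + blk 0 n e i + blk (2*n) n e i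
           + mv n m (B r) (blk (3*n) m e) i + mv n l (mtrans (A r)) \<mu> i) = (\<lambda>_. 0)"
    by blast
  moreover have "f = cat4 n m ?v (blk n n f) ?v (mv m n (mtrans (B r)) ?v)"
    using cat4_blk[OF f] flow by simp
  moreover have "e = cat4 n m (blk 0 n e) ?v (blk (2*n) n e) (blk (3*n) m e)"
    using cat4_blk[OF e] by simp
  ultimately show thesis
    using that ker blk_in_rvec by blast
qed

lemma Dpos_zero: "(\<lambda>_. 0, \<lambda>_. 0) \<in> Dpos n m l A B r"
proof -
  have "(cat4 n m (\<lambda>_. 0) (\<lambda>_. 0) (\<lambda>_. 0) (mv m n (mtrans (B r)) (\<lambda>_. 0)),
         cat4 n m (\<lambda>_. 0) (\<lambda>_. 0) (\<lambda>_. 0) (\<lambda>_. 0)) \<in> Dpos n m l A B r"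
    by (rule cat4_in_Dpos[where \<mu> = "\<lambda>_. 0"]) (simp_all add: rvec_zero mv_zero)
  moreover have "cat4 n m (\<lambda>_. 0) (\<lambda>_. 0) (\<lambda>_. 0) (\<lambda>_. 0) = (\<lambda>_. 0)"
    by (simp add: cat4_def fun_eq_iff)
  ultimately show ?thesis
    by (simp add: mv_zero)
qed

lemma Dpos_lincomb:
  assumes "(f, e) \<in> Dpos n m l A B r" "(f', e') \<in> Dpos n m l A B r"
  shows "(\<lambda>i. s * f i + t * f' i, \<lambda>i. s * e i + t * e' i) \<in> Dpos n m l A B r"
proof -
  obtain v F FL FR Fext \<mu> where D: "v \<in> rvec n" "F \<in> rvec n" "FL \<in> rvec n" "FR \<in> rvec n"
      "Fext \<in> rvec m" "\<mu> \<in> rvec l" "mv l n (A r) v = (\<lambda>_. 0)"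
    and bal: "(\<lambda>i. F i + FL i + FR i + mv n m (B r) Fext i + mv n l (mtrans (A r)) \<mu> i) = (\<lambda>_. 0)"
    and fe: "f = cat4 n m v F v (mv m n (mtrans (B r)) v)" "e = cat4 n m FL v FR Fext"
    using assms(1) by (rule DposE)
  obtain v' F' FL' FR' Fext' \<mu>' where D': "v' \<in> rvec n" "F' \<in> rvec n" "FL' \<in> rvec n" "FR' \<in> rvec n"
      "Fext' \<in> rvec m" "\<mu>' \<in> rvec l" "mv l n (A r) v' = (\<lambda>_. 0)"
    and bal': "(\<lambda>i. F' i + FL' i + FR' i + mv n m (B r) Fext' i + mv n l (mtrans (A r)) \<mu>' i) = (\<lambda>_. 0)"
    and fe': "f' = cat4 n m v' F' v' (mv m n (mtrans (B r)) v')" "e' = cat4 n m FL' v' FR' Fext'"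
    using assms(2) by (rule DposE)
  let ?lc = "\<lambda>x y i. s * x i + t * y i"
  have "(\<lambda>i. ?lc F F' i + ?lc FL FL' i + ?lc FR FR' i + mv n m (B r) (?lc Fext Fext') i
      + mv n l (mtrans (A r)) (?lc \<mu> \<mu>') i) = (\<lambda>_. 0)"
  proof
    fix i
    have "s * (F i + FL i + FR i + mv n m (B r) Fext i + mv n l (mtrans (A r)) \<mu> i)
        + t * (F' i + FL' i + FR' i + mv n m (B r) Fext' i + mv n l (mtrans (A r)) \<mu>' i) = 0"
      using fun_cong[OF bal, of i] fun_cong[OF bal', of i] by simp
    then show "?lc F F' i + ?lc FL FL' i + ?lc FR FR' i + mv n m (B r) (?lc Fext Fext') i
        + mv n l (mtrans (A r)) (?lc \<mu> \<mu>') i = 0"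
      by (simp add: mv_add mv_scale algebra_simps)
  qed
  with D D' have "(cat4 n m (?lc v v') (?lc F F') (?lc v v') (mv m n (mtrans (B r)) (?lc v v')),
      cat4 n m (?lc FL FL') (?lc v v') (?lc FR FR') (?lc Fext Fext')) \<in> Dpos n m l A B r"
    by (intro cat4_in_Dpos[where \<mu> = "?lc \<mu> \<mu>'"]) (simp_all add: rvec_add rvec_scale mv_add mv_scale)
  then show ?thesis
    unfolding fe fe' cat4_lincomb mv_add mv_scale .
qed

lemma ip_balance:
  assumes "(\<lambda>i. F i + FL i + FR i + mv n m Bm Fext i + mv n l (mtrans M) \<mu> i) = (\<lambda>_. 0)"
    and "mv l n M v = (\<lambda>_. 0)"
  shows "ip n v F + ip n v FL + ip n v FR + ip m (mv m n (mtrans Bm) v) Fext = 0"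
proof -
  have sum: "(\<lambda>i. F i + FL i + FR i + mv n m Bm Fext i) = (\<lambda>i. - mv n l (mtrans M) \<mu> i)"
  proof
    fix i
    show "F i + FL i + FR i + mv n m Bm Fext i = - mv n l (mtrans M) \<mu> i"
      using fun_cong[OF assms(1), of i] by (simp add: eq_neg_iff_add_eq_0)
  qed
  have "ip n v F + ip n v FL + ip n v FR + ip m (mv m n (mtrans Bm) v) Fext
      = ip n v (\<lambda>i. F i + FL i + FR i + mv n m Bm Fext i)"
    by (simp add: ip_add_right ip_mv_mtrans)
  also have "\<dots> = - ip l \<mu> (mv l n M v)"
    unfolding sum by (simp add: ip_uminus_right ip_commute[of n v] ip_mv_mtrans)
  finally show ?thesis
    using assms(2) by simp
qed

lemma Dpos_isotropic:
  assumes "(f, e) \<in> Dpos n m l A B r" "(f', e') \<in> Dpos n m l A B r"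
  shows "ip (3*n+m) f' e + ip (3*n+m) f e' = 0"
proof -
  obtain v F FL FR Fext \<mu> where ker: "mv l n (A r) v = (\<lambda>_. 0)"
    and bal: "(\<lambda>i. F i + FL i + FR i + mv n m (B r) Fext i + mv n l (mtrans (A r)) \<mu> i) = (\<lambda>_. 0)"
    and fe: "f = cat4 n m v F v (mv m n (mtrans (B r)) v)" "e = cat4 n m FL v FR Fext"
    using assms(1) by (rule DposE)
  obtain v' F' FL' FR' Fext' \<mu>' where ker': "mv l n (A r) v' = (\<lambda>_. 0)"
    and bal': "(\<lambda>i. F' i + FL' i + FR' i + mv n m (B r) Fext' i + mv n l (mtrans (A r)) \<mu>' i) = (\<lambda>_. 0)"
    and fe': "f' = cat4 n m v' F' v' (mv m n (mtrans (B r)) v')" "e' = cat4 n m FL' v' FR' Fext'"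
    using assms(2) by (rule DposE)
  have "ip (3*n+m) f' e + ip (3*n+m) f e'
      = (ip n v' F + ip n v' FL + ip n v' FR + ip m (mv m n (mtrans (B r)) v') Fext)
        + (ip n v F' + ip n v FL' + ip n v FR' + ip m (mv m n (mtrans (B r)) v) Fext')"
    unfolding fe fe' ip_cat4 by (simp add: ip_commute[of n F] ip_commute[of n F'])
  then show ?thesis
    using ip_balance[OF bal ker'] ip_balance[OF bal' ker] by simp
qed

lemma Dpos_orth_flow:
  assumes "a \<in> rvec n" "c \<in> rvec n" "d \<in> rvec m" "v \<in> rvec n"
    and orth: "\<forall>(fh, eh)\<in>Dpos n m l A B r.
      ip (3*n+m) fh (cat4 n m FL v FR Fext) + ip (3*n+m) (cat4 n m a b c d) eh = 0"
  shows "a = v" "c = v" "d = mv m n (mtrans (B r)) v" "mv l n (A r) v = (\<lambda>_. 0)"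
proof -
  have test: "ip n x FL + ip n y v + ip n z FR + ip m w Fext
      + (ip n a x' + ip n b y' + ip n c z' + ip m d w') = 0"
    if "(cat4 n m x y z w, cat4 n m x' y' z' w') \<in> Dpos n m l A B r" for x y z w x' y' z' w'
    using bspec[OF orth that] by (simp add: ip_cat4)
  let ?z = "\<lambda>_::nat. 0::real" and ?Bt = "mv m n (mtrans (B r))"
  show "a = v"
  proof (rule rvec_eqI_ip[OF assms(1,4)])
    fix x assume "x \<in> rvec n"
    then have "(cat4 n m ?z x ?z (?Bt ?z), cat4 n m (\<lambda>i. - x i) ?z ?z ?z) \<in> Dpos n m l A B r"
      by (intro cat4_in_Dpos[where \<mu> = ?z]) (simp_all add: rvec_closed mv_zero)
    from test[OF this] show "ip n x a = ip n x v"
      by (simp add: mv_zero ip_uminus_right ip_commute[of n a])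
  qed
  show "c = v"
  proof (rule rvec_eqI_ip[OF assms(2,4)])
    fix x assume "x \<in> rvec n"
    then have "(cat4 n m ?z x ?z (?Bt ?z), cat4 n m ?z ?z (\<lambda>i. - x i) ?z) \<in> Dpos n m l A B r"
      by (intro cat4_in_Dpos[where \<mu> = ?z]) (simp_all add: rvec_closed mv_zero)
    from test[OF this] show "ip n x c = ip n x v"
      by (simp add: mv_zero ip_uminus_right ip_commute[of n c])
  qed
  show "d = ?Bt v"
  proof (rule rvec_eqI_ip[OF assms(3) mv_in_rvec])
    fix y assume "y \<in> rvec m"
    then have "(cat4 n m ?z (\<lambda>i. - mv n m (B r) y i) ?z (?Bt ?z), cat4 n m ?z ?z ?z y)
        \<in> Dpos n m l A B r"
      by (intro cat4_in_Dpos[where \<mu> = ?z]) (simp_all add: rvec_closed mv_zero)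
    from test[OF this] show "ip m y d = ip m y (?Bt v)"
      by (simp add: mv_zero ip_uminus_left ip_commute[of m y] ip_mv_mtrans
          ip_commute[of n "mv n m (B r) y"])
  qed
  show "mv l n (A r) v = ?z"
  proof (rule rvec_eqI_ip[OF mv_in_rvec rvec_zero])
    fix \<mu> assume "\<mu> \<in> rvec l"
    then have "(cat4 n m ?z (\<lambda>i. - mv n l (mtrans (A r)) \<mu> i) ?z (?Bt ?z), cat4 n m ?z ?z ?z ?z)
        \<in> Dpos n m l A B r"
      by (intro cat4_in_Dpos[where \<mu> = \<mu>]) (simp_all add: rvec_closed mv_zero)
    from test[OF this] show "ip l \<mu> (mv l n (A r) v) = ip l \<mu> ?z"
      by (simp add: mv_zero ip_uminus_left ip_mv_mtrans)
  qed
qed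

lemma Dpos_maximal:
  assumes row_space: "\<And>s. s \<in> rvec n \<Longrightarrow> \<forall>w\<in>rvec n. mv l n (A r) w = (\<lambda>_. 0) \<longrightarrow> ip n s w = 0
      \<Longrightarrow> \<exists>\<mu>\<in>rvec l. s = mv n l (mtrans (A r)) \<mu>"
    and "f \<in> rvec (3*n+m)" "e \<in> rvec (3*n+m)"
    and orth: "\<forall>(fh, eh)\<in>Dpos n m l A B r. ip (3*n+m) fh e + ip (3*n+m) f eh = 0"
  shows "(f, e) \<in> Dpos n m l A B r"
proof -
  obtain a b c d where abcd: "a \<in> rvec n" "b \<in> rvec n" "c \<in> rvec n" "d \<in> rvec m"
    and f: "f = cat4 n m a b c d"
    using assms(2) by (rule cat4_cases)
  obtain FL v FR Fext where e_blocks: "FL \<in> rvec n" "v \<in> rvec n" "FR \<in> rvec n" "Fext \<in> rvec m"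
    and e: "e = cat4 n m FL v FR Fext"
    using assms(3) by (rule cat4_cases)
  note flow = Dpos_orth_flow[OF abcd(1,3,4) e_blocks(2) orth[unfolded f e]]
  let ?s = "\<lambda>i. b i + FL i + FR i + mv n m (B r) Fext i"
  have "\<forall>w\<in>rvec n. mv l n (A r) w = (\<lambda>_. 0) \<longrightarrow> ip n ?s w = 0"
  proof (intro ballI impI)
    fix w assume "w \<in> rvec n" "mv l n (A r) w = (\<lambda>_. 0)"
    then have "(cat4 n m w (\<lambda>_. 0) w (mv m n (mtrans (B r)) w), cat4 n m (\<lambda>_. 0) w (\<lambda>_. 0) (\<lambda>_. 0))
        \<in> Dpos n m l A B r"
      by (intro cat4_in_Dpos[where \<mu> = "\<lambda>_. 0"]) (simp_all add: rvec_closed mv_zero)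
    from bspec[OF orth this] show "ip n ?s w = 0"
      unfolding f e by (simp add: ip_cat4 ip_add_left ip_mv_mtrans ip_commute[where y = w])
  qed
  moreover have "?s \<in> rvec n"
    using abcd e_blocks by (simp add: rvec_closed)
  ultimately obtain \<mu> where "\<mu> \<in> rvec l" and s: "?s = mv n l (mtrans (A r)) \<mu>"
    using row_space by blast
  have "(\<lambda>i. b i + FL i + FR i + mv n m (B r) Fext i + mv n l (mtrans (A r)) (\<lambda>i. - \<mu> i) i)
      = (\<lambda>_. 0)"
    using s by (auto simp: mv_uminus fun_eq_iff dest: fun_cong)
  then show ?thesis
    unfolding f e flow(1,2,3)
    by (intro cat4_in_Dpos[where \<mu> = "\<lambda>i. - \<mu> i"])
      (simp_all add: abcd e_blocks flow(4) \<open>\<mu> \<in> rvec l\<close> rvec_closed)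
qed

lemma dirac_Dpos:
  assumes "\<And>s. s \<in> rvec n \<Longrightarrow> \<forall>w\<in>rvec n. mv l n (A r) w = (\<lambda>_. 0) \<longrightarrow> ip n s w = 0
      \<Longrightarrow> \<exists>\<mu>\<in>rvec l. s = mv n l (mtrans (A r)) \<mu>"
  shows "dirac (3*n+m) (Dpos n m l A B r)"
  unfolding dirac_def
proof (intro conjI)
  show "Dpos n m l A B r \<subseteq> rvec (3*n+m) \<times> rvec (3*n+m)"
    by (auto simp: Dpos_def)
  show "(0, 0) \<in> Dpos n m l A B r"
    using Dpos_zero by (simp add: zero_fun_def)
  show "\<forall>(f, e)\<in>Dpos n m l A B r. \<forall>(f', e')\<in>Dpos n m l A B r.
      (\<lambda>i. f i + f' i, \<lambda>i. e i + e' i) \<in> Dpos n m l A B r"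
    using Dpos_lincomb[where s = 1 and t = 1] by fastforce
  show "\<forall>(f, e)\<in>Dpos n m l A B r. \<forall>c::real. (\<lambda>i. c * f i, \<lambda>i. c * e i) \<in> Dpos n m l A B r"
    using Dpos_lincomb[OF _ Dpos_zero, where t = 0] by fastforce
  show "\<forall>f\<in>rvec (3*n+m). \<forall>e\<in>rvec (3*n+m). (f, e) \<in> Dpos n m l A B r \<longleftrightarrow>
      (\<forall>(fh, eh)\<in>Dpos n m l A B r. ip (3*n+m) fh e + ip (3*n+m) f eh = 0)"
    using Dpos_isotropic Dpos_maximal[where A = A and r = r, OF assms] by blast
qed

section \<open>Parametrizing kernel and row space\<close>

definition free_coeff :: "nat \<Rightarrow> nat \<Rightarrow> (nat \<Rightarrow> nat) \<Rightarrow> (nat \<Rightarrow> nat \<Rightarrow> real) \<Rightarrow> (nat \<Rightarrow> real)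
    \<Rightarrow> nat \<Rightarrow> real" where
  "free_coeff n k idx C z i = (\<Sum>j<n. if j \<in> idx ` {..<k} then 0 else C i j * z j)"

definition ker_param :: "nat \<Rightarrow> nat \<Rightarrow> (nat \<Rightarrow> nat) \<Rightarrow> (nat \<Rightarrow> nat \<Rightarrow> real) \<Rightarrow> (nat \<Rightarrow> real)
    \<Rightarrow> nat \<Rightarrow> real" where
  "ker_param n k idx C z = (\<lambda>j. if j < n then if j \<in> idx ` {..<k}
      then - free_coeff n k idx C z (inv_into {..<k} idx j) else z j else 0)"

definition row_param :: "nat \<Rightarrow> nat \<Rightarrow> (nat \<Rightarrow> nat) \<Rightarrow> (nat \<Rightarrow> nat \<Rightarrow> real) \<Rightarrow> (nat \<Rightarrow> real)
    \<Rightarrow> nat \<Rightarrow> real" where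
  "row_param n k idx C z = (\<lambda>j. if j < n then (\<Sum>i<k. C i j * z (idx i)) else 0)"

definition independent_columns :: "nat \<Rightarrow> nat \<Rightarrow> (nat \<Rightarrow> nat) \<Rightarrow> (nat \<Rightarrow> nat \<Rightarrow> real) \<Rightarrow> bool" where
  "independent_columns l k idx M \<longleftrightarrow>
     (\<forall>y. (\<forall>p<l. (\<Sum>i<k. y i * M p (idx i)) = 0) \<longrightarrow> (\<forall>i<k. y i = 0))"

lemma independent_columnsI:
  "(\<And>y i. (\<And>p. p < l \<Longrightarrow> (\<Sum>i<k. y i * M p (idx i)) = 0) \<Longrightarrow> i < k \<Longrightarrow> y i = 0)
    \<Longrightarrow> independent_columns l k idx M"
  by (simp add: independent_columns_def)

lemma independent_columnsD:
  "independent_columns l k idx M \<Longrightarrow> (\<And>p. p < l \<Longrightarrow> (\<Sum>i<k. y i * M p (idx i)) = 0)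
    \<Longrightarrow> i < k \<Longrightarrow> y i = 0"
  by (simp add: independent_columns_def)

lemma ker_param_in_rvec: "ker_param n k idx C z \<in> rvec n"
  and row_param_in_rvec: "row_param n k idx C z \<in> rvec n"
  by (auto simp: ker_param_def row_param_def rvec_def)

lemma ker_param_add:
    "ker_param n k idx C (\<lambda>i. x i + y i) = (\<lambda>i. ker_param n k idx C x i + ker_param n k idx C y i)"
  and ker_param_scale: "ker_param n k idx C (\<lambda>i. t * x i) = (\<lambda>i. t * ker_param n k idx C x i)"
  and row_param_add:
    "row_param n k idx C (\<lambda>i. x i + y i) = (\<lambda>i. row_param n k idx C x i + row_param n k idx C y i)"
  and row_param_scale: "row_param n k idx C (\<lambda>i. t * x i) = (\<lambda>i. t * row_param n k idx C x i)"
  by (auto simp: ker_param_def row_param_def free_coeff_def fun_eq_iff sum.distrib[symmetric]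
      sum_distrib_left algebra_simps intro!: sum.cong)

text \<open>The columns \<open>idx 0, \<dots>, idx (k - 1)\<close> of \<open>M\<close> form a basis of its column space,
  and \<open>C i j\<close> is the \<open>i\<close>-th coordinate of column \<open>j\<close> in this basis. Then
  \<open>ker_param\<close> parametrizes the kernel of \<open>M\<close> by the coordinates outside \<open>idx\<close> (the free
  ones), and \<open>row_param\<close> parametrizes the row space of \<open>M\<close> by the basic coordinates.\<close>
locale column_basis =
  fixes n l k :: nat and idx :: "nat \<Rightarrow> nat" and M C :: "nat \<Rightarrow> nat \<Rightarrow> real"
  assumes idx_less: "i < k \<Longrightarrow> idx i < n"
    and inj_idx: "inj_on idx {..<k}"
    and column_expansion: "j < n \<Longrightarrow> p < l \<Longrightarrow> M p j = (\<Sum>i<k. C i j * M p (idx i))"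
    and columns_independent: "independent_columns l k idx M"
    and basic_rows_surj: "\<exists>\<mu>\<in>rvec l. \<forall>i<k. (\<Sum>p<l. M p (idx i) * \<mu> p) = y i"
begin

abbreviation "J \<equiv> idx ` {..<k}"
abbreviation "Phi \<equiv> ker_param n k idx C"
abbreviation "Psi \<equiv> row_param n k idx C"

lemma sum_split_basic:
  "(\<Sum>j<n. g j) = (\<Sum>i<k. g (idx i)) + (\<Sum>j<n. if j \<in> J then 0 else g j)" for g :: "nat \<Rightarrow> real"
proof -
  have "(\<Sum>j<n. g j) = (\<Sum>j<n. if j \<in> J then g j else 0) + (\<Sum>j<n. if j \<in> J then 0 else g j)"
    by (subst sum.distrib[symmetric]) (rule sum.cong, auto)
  also have "(\<Sum>j<n. if j \<in> J then g j else 0) = sum g ({..<n} \<inter> J)"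
    by (rule sum.inter_restrict[symmetric]) simp
  also have "{..<n} \<inter> J = J"
    using idx_less by auto
  also have "sum g J = (\<Sum>i<k. g (idx i))"
    using inj_idx by (simp add: sum.reindex)
  finally show ?thesis .
qed

lemma free_part_expansion:
  assumes "p < l"
  shows "(\<Sum>j<n. if j \<in> J then 0 else M p j * z j) = (\<Sum>i<k. M p (idx i) * free_coeff n k idx C z i)"
proof -
  have "(\<Sum>j<n. if j \<in> J then 0 else M p j * z j)
      = (\<Sum>j<n. \<Sum>i<k. if j \<in> J then 0 else M p (idx i) * (C i j * z j))"
    using assms by (intro sum.cong) (auto simp: column_expansion sum_distrib_left sum_distrib_right mult_ac)
  also have "\<dots> = (\<Sum>i<k. \<Sum>j<n. if j \<in> J then 0 else M p (idx i) * (C i j * z j))"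
    by (rule sum.swap)
  also have "\<dots> = (\<Sum>i<k. M p (idx i) * free_coeff n k idx C z i)"
    by (simp add: free_coeff_def sum_distrib_left if_distrib cong: if_cong)
  finally show ?thesis .
qed

lemma ker_param_basic: "i < k \<Longrightarrow> Phi z (idx i) = - free_coeff n k idx C z i"
  using idx_less inj_idx by (simp add: ker_param_def inv_into_f_f)

lemma ker_param_free: "j < n \<Longrightarrow> j \<notin> J \<Longrightarrow> Phi z j = z j"
  by (simp add: ker_param_def)

lemma ker_param_cong: "(\<And>j. j < n \<Longrightarrow> j \<notin> J \<Longrightarrow> z j = z' j) \<Longrightarrow> Phi z = Phi z'"
  by (auto simp: ker_param_def free_coeff_def fun_eq_iff intro!: sum.cong)

lemma ker_param_in_ker: "mv l n M (Phi z) = (\<lambda>_. 0)"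
proof
  fix p
  have "free_coeff n k idx C (Phi z) = free_coeff n k idx C z"
    by (auto simp: free_coeff_def ker_param_free fun_eq_iff intro!: sum.cong)
  then have "(\<Sum>j<n. M p j * Phi z j) = 0" if "p < l"
    using that by (simp add: sum_split_basic[of "\<lambda>j. M p j * Phi z j"] free_part_expansion
        ker_param_basic sum_negf)
  then show "mv l n M (Phi z) p = 0"
    by (simp add: mv_def)
qed

lemma ker_param_fixes_ker:
  assumes "v \<in> rvec n" "mv l n M v = (\<lambda>_. 0)"
  shows "Phi v = v"
proof
  fix j
  show "Phi v j = v j"
  proof (cases "j \<in> J")
    case True
    then obtain i where i: "i < k" "j = idx i" by auto
    define y where "y i = v (idx i) + free_coeff n k idx C v i" for i
    have "(\<Sum>i<k. y i * M p (idx i)) = 0" if "p < l" for p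
    proof -
      have "(\<Sum>i<k. y i * M p (idx i))
          = (\<Sum>i<k. M p (idx i) * v (idx i)) + (\<Sum>j<n. if j \<in> J then 0 else M p j * v j)"
        using that by (simp add: y_def free_part_expansion algebra_simps sum.distrib)
      also have "\<dots> = (\<Sum>j<n. M p j * v j)"
        by (rule sum_split_basic[symmetric])
      also have "\<dots> = 0"
        using fun_cong[OF assms(2), of p] that by (simp add: mv_def)
      finally show ?thesis .
    qed
    then have "y i = 0"
      using independent_columnsD[OF columns_independent] i(1) by blast
    then have "v (idx i) + free_coeff n k idx C v i = 0"
      by (simp add: y_def)
    then show ?thesis
      using i by (simp add: ker_param_basic)
  next
    case False
    then show ?thesis
      using assms(1) by (cases "j < n") (auto simp: ker_param_def rvec_def)
  qed
qed

lemma row_param_eq: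
  assumes "\<And>i. i < k \<Longrightarrow> (\<Sum>p<l. M p (idx i) * \<mu> p) = z (idx i)"
  shows "Psi z = mv n l (mtrans M) \<mu>"
proof
  fix j
  show "Psi z j = mv n l (mtrans M) \<mu> j"
  proof (cases "j < n")
    case True
    have "mv n l (mtrans M) \<mu> j = (\<Sum>p<l. \<Sum>i<k. C i j * (M p (idx i) * \<mu> p))"
      using True by (simp add: mv_def mtrans_def column_expansion sum_distrib_left sum_distrib_right
          mult_ac)
    also have "\<dots> = (\<Sum>i<k. C i j * (\<Sum>p<l. M p (idx i) * \<mu> p))"
      by (subst sum.swap) (simp add: sum_distrib_left)
    also have "\<dots> = Psi z j"
      using True by (simp add: assms row_param_def)
    finally show ?thesis ..
  qed (simp add: row_param_def mv_def)
qed

lemma row_param_in_range: "\<exists>\<mu>\<in>rvec l. Psi z = mv n l (mtrans M) \<mu>"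
  using basic_rows_surj[of "\<lambda>i. z (idx i)"] row_param_eq by blast

lemma row_param_basic:
  assumes "i < k"
  shows "Psi z (idx i) = z (idx i)"
proof -
  obtain \<mu> where \<mu>: "\<forall>i<k. (\<Sum>p<l. M p (idx i) * \<mu> p) = z (idx i)"
    using basic_rows_surj[of "\<lambda>i. z (idx i)"] by blast
  then have "Psi z = mv n l (mtrans M) \<mu>"
    by (simp add: row_param_eq)
  then show ?thesis
    using \<mu> assms idx_less by (simp add: mv_def mtrans_def)
qed

lemma row_param_fixes_range: "Psi (mv n l (mtrans M) \<mu>) = mv n l (mtrans M) \<mu>"
  by (rule row_param_eq) (simp add: mv_def mtrans_def idx_less)

lemma row_param_cong: "(\<And>i. i < k \<Longrightarrow> z (idx i) = z' (idx i)) \<Longrightarrow> Psi z = Psi z'"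
  by (auto simp: row_param_def fun_eq_iff intro!: sum.cong)

text \<open>The difference \<open>d\<close> between \<open>s\<close> and its image in the row space vanishes on the
  basic coordinates, which are the only ones where \<open>ker_param\<close> differs from the identity;
  hence \<open>\<langle>d, d\<rangle> = \<langle>d, ker_param d\<rangle> = 0\<close>.\<close>
lemma orth_ker_in_row_space:
  assumes "s \<in> rvec n" and orth: "\<forall>w\<in>rvec n. mv l n M w = (\<lambda>_. 0) \<longrightarrow> ip n s w = 0"
  shows "\<exists>\<mu>\<in>rvec l. s = mv n l (mtrans M) \<mu>"
proof -
  obtain \<mu> where "\<mu> \<in> rvec l" and \<mu>: "Psi s = mv n l (mtrans M) \<mu>"
    using row_param_in_range by blast
  define d where "d = (\<lambda>i. s i - Psi s i)"
  have "ip n d (Phi d) = ip n s (Phi d) - ip l \<mu> (mv l n M (Phi d))"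
    by (simp add: d_def ip_diff_left \<mu> ip_mv_mtrans)
  also have "\<dots> = 0"
    using orth by (simp add: ker_param_in_ker ker_param_in_rvec)
  finally have "ip n d (Phi d) = 0" .
  moreover have "ip n d (Phi d) = ip n d d"
    unfolding ip_def
  proof (rule sum.cong)
    fix j assume "j \<in> {..<n}"
    then show "d j * Phi d j = d j * d j"
      by (cases "j \<in> J") (auto simp: d_def row_param_basic ker_param_free)
  qed simp
  ultimately have "d = (\<lambda>_. 0)"
    using assms(1) by (intro ip_self_eq_0) (simp_all add: d_def rvec_diff row_param_in_rvec)
  then have "s = Psi s"
    by (auto simp: d_def fun_eq_iff dest: fun_cong)
  then show ?thesis
    using \<mu> \<open>\<mu> \<in> rvec l\<close> by auto
qed

lemma params_inj:
  assumes "z \<in> rvec n" "z' \<in> rvec n" "Phi z = Phi z'" "Psi z = Psi z'"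
  shows "z = z'"
proof
  fix j
  show "z j = z' j"
  proof (cases "j \<in> J")
    case True
    then obtain i where "i < k" "j = idx i" by auto
    then show ?thesis
      using row_param_basic[of i z] row_param_basic[of i z'] assms(4) by simp
  next
    case False
    then show ?thesis
      using ker_param_free[of j z] ker_param_free[of j z'] assms(1-3)
      by (cases "j < n") (auto simp: rvec_def)
  qed
qed

lemma params_surj:
  assumes "v \<in> rvec n" "mv l n M v = (\<lambda>_. 0)"
  obtains z where "z \<in> rvec n" "Phi z = v" "Psi z = mv n l (mtrans M) \<mu>"
proof
  let ?s = "mv n l (mtrans M) \<mu>"
  let ?z = "\<lambda>j. if j < n then if j \<in> J then ?s j else v j else 0"
  show "?z \<in> rvec n"
    by (simp add: rvec_def)
  have "Phi ?z = Phi v"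
    by (rule ker_param_cong) simp
  then show "Phi ?z = v"
    using ker_param_fixes_ker[OF assms] by simp
  have "Psi ?z = Psi ?s"
    by (rule row_param_cong) (simp add: idx_less)
  then show "Psi ?z = ?s"
    by (simp add: row_param_fixes_range)
qed

end

section \<open>Parametrizing the Dirac structure\<close>

text \<open>The first block of \<open>z\<close> carries both the free coordinates of the velocity (through
  \<open>ker_param\<close>) and the basic coordinates of the constraint force (through \<open>row_param\<close>);
  the other blocks are \<open>F\<^sub>L\<^sub>e\<close>, \<open>F\<^sub>R\<close> and \<open>F\<^sub>e\<^sub>x\<^sub>t\<close>, and
  \<open>F\<^sub>L\<^sub>f\<close> is then determined by the force balance.\<close>
definition dirac_param :: "nat \<Rightarrow> nat \<Rightarrow> nat \<Rightarrow> (nat \<Rightarrow> nat) \<Rightarrow> (nat \<Rightarrow> nat \<Rightarrow> real)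
    \<Rightarrow> (nat \<Rightarrow> nat \<Rightarrow> real) \<Rightarrow> (nat \<Rightarrow> real) \<Rightarrow> (nat \<Rightarrow> real) \<times> (nat \<Rightarrow> real)" where
  "dirac_param n m k idx C Bm z =
    (cat4 n m (ker_param n k idx C (blk 0 n z))
      (\<lambda>i. row_param n k idx C (blk 0 n z) i - (blk n n z i + blk (2*n) n z i + mv n m Bm (blk (3*n) m z) i))
      (ker_param n k idx C (blk 0 n z)) (mv m n (mtrans Bm) (ker_param n k idx C (blk 0 n z))),
     cat4 n m (blk n n z) (ker_param n k idx C (blk 0 n z)) (blk (2*n) n z) (blk (3*n) m z))"

lemma dirac_param_cat4:
  assumes "z1 \<in> rvec n" "z2 \<in> rvec n" "z3 \<in> rvec n" "z4 \<in> rvec m"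
  shows "dirac_param n m k idx C Bm (cat4 n m z1 z2 z3 z4) =
    (cat4 n m (ker_param n k idx C z1) (\<lambda>i. row_param n k idx C z1 i - (z2 i + z3 i + mv n m Bm z4 i))
      (ker_param n k idx C z1) (mv m n (mtrans Bm) (ker_param n k idx C z1)),
     cat4 n m z2 (ker_param n k idx C z1) z3 z4)"
  using assms by (simp add: dirac_param_def blk_cat4)

lemma dirac_param_add:
  "dirac_param n m k idx C Bm (\<lambda>i. x i + y i) =
    (\<lambda>i. fst (dirac_param n m k idx C Bm x) i + fst (dirac_param n m k idx C Bm y) i,
     \<lambda>i. snd (dirac_param n m k idx C Bm x) i + snd (dirac_param n m k idx C Bm y) i)"
  unfolding dirac_param_def blk_add ker_param_add row_param_add mv_add
  by (auto simp: cat4_def fun_eq_iff algebra_simps)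

lemma dirac_param_scale:
  "dirac_param n m k idx C Bm (\<lambda>i. t * x i) =
    (\<lambda>i. t * fst (dirac_param n m k idx C Bm x) i, \<lambda>i. t * snd (dirac_param n m k idx C Bm x) i)"
  unfolding dirac_param_def blk_scale ker_param_scale row_param_scale mv_scale
  by (auto simp: cat4_def fun_eq_iff algebra_simps)

context column_basis
begin

lemma dirac_param_in_Dpos:
  assumes "A r = M"
  shows "dirac_param n m k idx C (B r) z \<in> Dpos n m l A B r"
proof -
  obtain \<mu> where "\<mu> \<in> rvec l" "Psi (blk 0 n z) = mv n l (mtrans M) \<mu>"
    using row_param_in_range by blast
  then show ?thesis
    unfolding dirac_param_def
    by (intro cat4_in_Dpos[where \<mu> = "\<lambda>i. - \<mu> i"])
      (simp_all add: assms rvec_closed ker_param_in_rvec row_param_in_rvec ker_param_in_ker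
        mv_uminus fun_eq_iff)
qed

lemma inj_on_dirac_param: "inj_on (dirac_param n m k idx C Bm) (rvec (3*n+m))"
proof (rule inj_onI)
  fix z z' assume "z \<in> rvec (3*n+m)" "z' \<in> rvec (3*n+m)"
    and eq: "dirac_param n m k idx C Bm z = dirac_param n m k idx C Bm z'"
  then obtain z1 z2 z3 z4 z1' z2' z3' z4' where
    blocks: "z1 \<in> rvec n" "z2 \<in> rvec n" "z3 \<in> rvec n" "z4 \<in> rvec m"
      "z1' \<in> rvec n" "z2' \<in> rvec n" "z3' \<in> rvec n" "z4' \<in> rvec m"
    and z: "z = cat4 n m z1 z2 z3 z4" "z' = cat4 n m z1' z2' z3' z4'"
    by (metis cat4_cases)
  from eq have "cat4 n m z2 (Phi z1) z3 z4 = cat4 n m z2' (Phi z1') z3' z4'"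
    unfolding z dirac_param_cat4[OF blocks(1-4)] dirac_param_cat4[OF blocks(5-8)] by simp
  then have same: "z2 = z2'" "Phi z1 = Phi z1'" "z3 = z3'" "z4 = z4'"
    using blocks by (simp_all add: cat4_eq_iff ker_param_in_rvec)
  from eq have "blk n n (fst (dirac_param n m k idx C Bm z)) = blk n n (fst (dirac_param n m k idx C Bm z'))"
    by simp
  then have "(\<lambda>i. Psi z1 i - (z2 i + z3 i + mv n m Bm z4 i))
      = (\<lambda>i. Psi z1' i - (z2' i + z3' i + mv n m Bm z4' i))"
    unfolding z dirac_param_cat4[OF blocks(1-4)] dirac_param_cat4[OF blocks(5-8)] fst_conv
    using blocks by (simp add: blk_cat4 ker_param_in_rvec row_param_in_rvec rvec_closed)
  then have "Psi z1 = Psi z1'"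
    unfolding same by (auto simp: fun_eq_iff dest: fun_cong)
  then show "z = z'"
    using params_inj[OF blocks(1,5) same(2)] same z by simp
qed

lemma Dpos_subset_dirac_param_image:
  assumes "A r = M"
  shows "Dpos n m l A B r \<subseteq> dirac_param n m k idx C (B r) ` rvec (3*n+m)"
proof clarify
  fix f e assume "(f, e) \<in> Dpos n m l A B r"
  then obtain v F FL FR Fext \<mu> where D: "v \<in> rvec n" "F \<in> rvec n" "FL \<in> rvec n" "FR \<in> rvec n"
      "Fext \<in> rvec m" "mv l n M v = (\<lambda>_. 0)"
    and bal: "(\<lambda>i. F i + FL i + FR i + mv n m (B r) Fext i + mv n l (mtrans M) \<mu> i) = (\<lambda>_. 0)"
    and fe: "f = cat4 n m v F v (mv m n (mtrans (B r)) v)" "e = cat4 n m FL v FR Fext"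
    using assms by (auto elim: DposE)
  obtain z1 where z1: "z1 \<in> rvec n" "Phi z1 = v" "Psi z1 = mv n l (mtrans M) (\<lambda>i. - \<mu> i)"
    using params_surj[OF D(1,6)] by blast
  have "(\<lambda>i. Psi z1 i - (FL i + FR i + mv n m (B r) Fext i)) = F"
  proof
    fix i
    show "Psi z1 i - (FL i + FR i + mv n m (B r) Fext i) = F i"
      using fun_cong[OF bal, of i] by (simp add: z1(3) mv_uminus; linarith)
  qed
  then have "dirac_param n m k idx C (B r) (cat4 n m z1 FL FR Fext) = (f, e)"
    using z1 D by (simp add: dirac_param_cat4 fe)
  then show "(f, e) \<in> dirac_param n m k idx C (B r) ` rvec (3*n+m)"
    by (metis cat4_in_rvec image_eqI)
qed

lemma lin_bij_onto_dirac_param: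
  assumes "A r = M"
  shows "lin_bij_onto (3*n+m) (dirac_param n m k idx C (B r)) (Dpos n m l A B r)"
  unfolding lin_bij_onto_def bij_betw_def
proof (intro conjI ballI allI)
  show "dirac_param n m k idx C (B r) ` rvec (3*n+m) = Dpos n m l A B r"
    using dirac_param_in_Dpos[where A = A and r = r, OF assms]
      Dpos_subset_dirac_param_image[where A = A and r = r, OF assms]
    by blast
qed (simp_all add: dirac_param_add dirac_param_scale inj_on_dirac_param)

end

lemma continuous_on_free_coeff:
  assumes "\<And>i j. i < k \<Longrightarrow> j < n \<Longrightarrow> continuous_on V (\<lambda>r. C r i j)" "i < k"
  shows "continuous_on V (\<lambda>r. free_coeff n k idx (C r) z i)"
  unfolding free_coeff_def
proof (intro continuous_on_sum)
  fix j assume "j \<in> {..<n}"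
  then show "continuous_on V (\<lambda>r. if j \<in> idx ` {..<k} then 0 else C r i j * z j)"
    using assms by (cases "j \<in> idx ` {..<k}") (auto intro!: continuous_intros)
qed

lemma continuous_on_ker_param:
  assumes "\<And>i j. i < k \<Longrightarrow> j < n \<Longrightarrow> continuous_on V (\<lambda>r. C r i j)"
  shows "continuous_on V (\<lambda>r. ker_param n k idx (C r) z j)"
proof (cases "j < n \<and> j \<in> idx ` {..<k}")
  case True
  then have "inv_into {..<k} idx j < k"
    by (metis inv_into_into lessThan_iff)
  then show ?thesis
    using True by (simp add: ker_param_def continuous_on_minus continuous_on_free_coeff assms)
next
  case False
  then show ?thesis
    by (cases "j < n") (simp_all add: ker_param_def)
qed

lemma continuous_on_row_param:
  assumes "\<And>i j. i < k \<Longrightarrow> j < n \<Longrightarrow> continuous_on V (\<lambda>r. C r i j)"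
  shows "continuous_on V (\<lambda>r. row_param n k idx (C r) z j)"
  using assms by (cases "j < n") (auto simp: row_param_def intro!: continuous_intros)

lemma continuous_on_mv:
  assumes "\<And>i j. i < a \<Longrightarrow> j < b \<Longrightarrow> continuous_on V (\<lambda>r. M r i j)"
    and "\<And>j. continuous_on V (\<lambda>r. x r j)"
  shows "continuous_on V (\<lambda>r. mv a b (M r) (x r) i)"
  using assms by (cases "i < a") (auto simp: mv_def intro!: continuous_intros)

lemma continuous_on_cat4:
  assumes "\<And>j. continuous_on V (\<lambda>r. a r j)" "\<And>j. continuous_on V (\<lambda>r. b r j)"
    "\<And>j. continuous_on V (\<lambda>r. c r j)" "\<And>j. continuous_on V (\<lambda>r. d r j)"
  shows "continuous_on V (\<lambda>r. cat4 n m (a r) (b r) (c r) (d r))"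
proof (rule continuous_on_coordinatewise_then_product)
  show "continuous_on V (\<lambda>r. cat4 n m (a r) (b r) (c r) (d r) i)" for i
    unfolding cat4_def
    by (cases "i < n"; cases "i < 2*n"; cases "i < 3*n"; cases "i < 3*n+m") (simp_all add: assms)
qed

lemma continuous_on_dirac_param:
  assumes "\<And>i j. i < k \<Longrightarrow> j < n \<Longrightarrow> continuous_on V (\<lambda>r. C r i j)"
    and B: "\<And>i j. i < n \<Longrightarrow> j < m \<Longrightarrow> continuous_on V (\<lambda>r. Bm r i j)"
  shows "continuous_on V (\<lambda>r. dirac_param n m k idx (C r) (Bm r) z)"
proof -
  have Bt: "continuous_on V (\<lambda>r. mtrans (Bm r) i j)" if "i < m" "j < n" for i j
    using B that by (simp add: mtrans_def)
  note params = continuous_on_ker_param[OF assms(1)] continuous_on_row_param[OF assms(1)]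
  show ?thesis
    unfolding dirac_param_def
    by (intro continuous_on_Pair continuous_on_cat4)
      (auto intro!: continuous_intros params continuous_on_mv[OF B] continuous_on_mv[OF Bt])
qed

section \<open>Gram matrices and local column bases\<close>

lemma continuous_on_det:
  fixes G :: "'a::topological_space \<Rightarrow> real mat"
  assumes "\<And>r. G r \<in> carrier_mat k k"
    and "\<And>i j. i < k \<Longrightarrow> j < k \<Longrightarrow> continuous_on V (\<lambda>r. G r $$ (i, j))"
  shows "continuous_on V (\<lambda>r. Determinant.det (G r))"
proof -
  have "continuous_on V (\<lambda>r. \<Sum>p\<in>{p. p permutes {0..<k}}. signof p * (\<Prod>i = 0..<k. G r $$ (i, p i)))"
  proof (intro continuous_intros)
    fix p i assume "p \<in> {p. p permutes {0..<k}}" "i \<in> {0..<k}"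
    then show "continuous_on V (\<lambda>r. G r $$ (i, p i))"
      using assms(2) by (auto dest: permutes_in_image)
  qed
  moreover have "Determinant.det (G r)
      = (\<Sum>p\<in>{p. p permutes {0..<k}}. signof p * (\<Prod>i = 0..<k. G r $$ (i, p i)))" for r
    by (rule det_def'[OF assms(1)])
  ultimately show ?thesis
    by simp
qed

lemma continuous_on_adj_mat:
  fixes G :: "'a::topological_space \<Rightarrow> real mat"
  assumes carrier: "\<And>r. G r \<in> carrier_mat k k"
    and cont: "\<And>i j. i < k \<Longrightarrow> j < k \<Longrightarrow> continuous_on V (\<lambda>r. G r $$ (i, j))"
    and "i < k" "j < k"
  shows "continuous_on V (\<lambda>r. adj_mat (G r) $$ (i, j))"
proof -
  have "continuous_on V (\<lambda>r. Determinant.det (mat_delete (G r) j i))"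
  proof (rule continuous_on_det)
    show "mat_delete (G r) j i \<in> carrier_mat (k - 1) (k - 1)" for r
      using carrier[of r] by (simp add: mat_delete_def)
    fix i' j' assume ij': "i' < k - 1" "j' < k - 1"
    have "mat_delete (G r) j i $$ (i', j')
        = G r $$ (if i' < j then i' else Suc i', if j' < i then j' else Suc j')" for r
      using carrier[of r] ij' by (auto simp: mat_delete_def)
    moreover have "(if i' < j then i' else Suc i') < k" "(if j' < i then j' else Suc j') < k"
      using ij' by auto
    ultimately show "continuous_on V (\<lambda>r. mat_delete (G r) j i $$ (i', j'))"
      using cont by simp
  qed
  moreover have "adj_mat (G r) $$ (i, j) = (- 1) ^ (j + i) * Determinant.det (mat_delete (G r) j i)" for r
    using assms carrier_matD[OF carrier[of r]] by (simp add: adj_mat_def cofactor_def)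
  ultimately show ?thesis
    by (simp add: continuous_on_mult_left)
qed

lemma adj_mat_div_det_inverse:
  fixes G :: "real mat"
  assumes G: "G \<in> carrier_mat k k" and "Determinant.det G \<noteq> 0" "i < k" "i' < k"
  shows "(\<Sum>j<k. adj_mat G $$ (i, j) / Determinant.det G * G $$ (j, i')) = (if i = i' then 1 else 0)"
    and "(\<Sum>j<k. G $$ (i, j) * (adj_mat G $$ (j, i') / Determinant.det G)) = (if i = i' then 1 else 0)"
proof -
  have "(adj_mat G * G) $$ (i, i') = (Determinant.det G \<cdot>\<^sub>m 1\<^sub>m k) $$ (i, i')"
    "(G * adj_mat G) $$ (i, i') = (Determinant.det G \<cdot>\<^sub>m 1\<^sub>m k) $$ (i, i')"
    using adj_mat(2,3)[OF G] by simp_all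
  moreover have "(adj_mat G * G) $$ (i, i') = (\<Sum>j<k. adj_mat G $$ (i, j) * G $$ (j, i'))"
    "(G * adj_mat G) $$ (i, i') = (\<Sum>j<k. G $$ (i, j) * adj_mat G $$ (j, i'))"
    using assms adj_mat(1)[OF G] by (simp_all add: scalar_prod_def atLeast0LessThan)
  ultimately show "(\<Sum>j<k. adj_mat G $$ (i, j) / Determinant.det G * G $$ (j, i')) = (if i = i' then 1 else 0)"
    and "(\<Sum>j<k. G $$ (i, j) * (adj_mat G $$ (j, i') / Determinant.det G)) = (if i = i' then 1 else 0)"
    using assms by (simp_all add: sum_divide_distrib[symmetric])
qed

lemma det_eq_0_imp_kernel:
  fixes G :: "real mat"
  assumes G: "G \<in> carrier_mat k k" and "Determinant.det G = 0"
  obtains y where "\<exists>i<k. y i \<noteq> 0" "\<And>i. i < k \<Longrightarrow> (\<Sum>j<k. G $$ (i, j) * y j) = 0"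
proof -
  obtain v where v: "v \<in> carrier_vec k" "v \<noteq> 0\<^sub>v k" "G *\<^sub>v v = 0\<^sub>v k"
    using det_0_iff_vec_prod_zero[OF G] assms(2) by blast
  have "\<exists>i<k. vec_index v i \<noteq> 0"
    using v(1,2) by (auto simp: vec_eq_iff)
  moreover have "(\<Sum>j<k. G $$ (i, j) * vec_index v j) = 0" if "i < k" for i
    using arg_cong[OF v(3), of "\<lambda>w. vec_index w i"] that v(1) G
    by (simp add: scalar_prod_def atLeast0LessThan)
  ultimately show thesis
    using that[of "vec_index v"] by blast
qed

interpretation fs: vector_space fscale
  by unfold_locales (auto simp: fscale_def fun_eq_iff algebra_simps)

lemma (in vector_space) independent_card_dim_spanning:
  assumes "finite V" "B \<subseteq> V" "independent B" "card B = dim V"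
  shows "V \<subseteq> span B"
proof
  fix a assume "a \<in> V"
  show "a \<in> span B"
  proof (rule ccontr)
    assume "a \<notin> span B"
    then have indep: "independent (insert a B)" and "a \<notin> B"
      using independent_insertI[OF _ assms(3)] span_base by blast+
    obtain B' where B': "B' \<subseteq> V" "V \<subseteq> span B'" "card B' = dim V"
      by (rule basis_exists)
    have "insert a B \<subseteq> span B'"
      using \<open>a \<in> V\<close> assms(2) B'(2) by blast
    then have "card (insert a B) \<le> card B'"
      using independent_span_bound[OF finite_subset[OF B'(1) assms(1)] indep] by blast
    moreover have "card (insert a B) = Suc (card B)"
      using \<open>a \<notin> B\<close> finite_subset[OF assms(2,1)] by simp
    ultimately show False
      using assms(4) B'(3) by simp
  qed
qed

lemma sum_fun_apply: "(sum f I) p = (\<Sum>i\<in>I. f i p)" for f :: "'b \<Rightarrow> 'c \<Rightarrow> 'a::comm_monoid_add"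
  by (induction I rule: infinite_finite_induct) (auto simp: plus_fun_def zero_fun_def)

lemma sum_mult_sum_swap:
  "(\<Sum>i\<in>I. a i * (\<Sum>j\<in>J. G i j * y j)) = (\<Sum>j\<in>J. (\<Sum>i\<in>I. a i * G i j) * y j)"
  for a :: "'c \<Rightarrow> 'a::semiring_0"
proof -
  have "(\<Sum>i\<in>I. a i * (\<Sum>j\<in>J. G i j * y j)) = (\<Sum>i\<in>I. \<Sum>j\<in>J. a i * G i j * y j)"
    by (simp add: sum_distrib_left mult.assoc)
  also have "\<dots> = (\<Sum>j\<in>J. \<Sum>i\<in>I. a i * G i j * y j)"
    by (rule sum.swap)
  also have "\<dots> = (\<Sum>j\<in>J. (\<Sum>i\<in>I. a i * G i j) * y j)"
    by (simp only: sum_distrib_right)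
  finally show ?thesis .
qed

definition mat_column :: "nat \<Rightarrow> (nat \<Rightarrow> nat \<Rightarrow> real) \<Rightarrow> nat \<Rightarrow> nat \<Rightarrow> real" where
  "mat_column l M j = (\<lambda>p. if p < l then M p j else 0)"

lemma mat_rank_eq_dim_columns: "mat_rank l n M = fs.dim (mat_column l M ` {..<n})"
  by (simp add: mat_rank_def mat_column_def)

lemma sum_fscale_column_apply:
  "(\<Sum>i\<in>I. fscale (y i) (mat_column l M (idx i))) p = (if p < l then (\<Sum>i\<in>I. y i * M p (idx i)) else 0)"
  by (simp add: sum_fun_apply fscale_def mat_column_def)

lemma independent_columns_imp_fs_independent:
  assumes indep: "independent_columns l k idx M"
  shows "inj_on (\<lambda>i. mat_column l M (idx i)) {..<k}"
    and "fs.independent ((\<lambda>i. mat_column l M (idx i)) ` {..<k})"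
proof -
  show inj: "inj_on (\<lambda>i. mat_column l M (idx i)) {..<k}"
  proof (rule inj_onI, rule ccontr)
    fix i i' assume "i \<in> {..<k}" "i' \<in> {..<k}" "i \<noteq> i'"
      and eq: "mat_column l M (idx i) = mat_column l M (idx i')"
    define y where "y j = (if j = i then 1 else 0) - (if j = i' then 1 else 0 :: real)" for j
    have "y j * M p (idx j) = (if j = i then M p (idx i) else 0) - (if j = i' then M p (idx i') else 0)"
      for j p by (simp add: y_def left_diff_distrib)
    then have "(\<Sum>j<k. y j * M p (idx j)) = M p (idx i) - M p (idx i')" for p
      using \<open>i \<in> {..<k}\<close> \<open>i' \<in> {..<k}\<close> by (simp add: sum_subtractf)
    moreover have "M p (idx i) = M p (idx i')" if "p < l" for p
      using fun_cong[OF eq, of p] that by (simp add: mat_column_def)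
    ultimately have "y i = 0"
      using independent_columnsD[OF indep, of y i] \<open>i \<in> {..<k}\<close> by simp
    then show False
      using \<open>i \<noteq> i'\<close> by (simp add: y_def)
  qed
  show "fs.independent ((\<lambda>i. mat_column l M (idx i)) ` {..<k})"
  proof (rule fs.independent_if_scalars_zero)
    fix u b assume sum0: "(\<Sum>b\<in>(\<lambda>i. mat_column l M (idx i)) ` {..<k}. fscale (u b) b) = 0"
      and b: "b \<in> (\<lambda>i. mat_column l M (idx i)) ` {..<k}"
    have "(\<Sum>i<k. u (mat_column l M (idx i)) * M p (idx i)) = 0" if "p < l" for p
      using fun_cong[OF sum0, of p] that inj by (simp add: sum.reindex sum_fscale_column_apply)
    then show "u b = 0"
      using independent_columnsD[OF indep, of "\<lambda>i. u (mat_column l M (idx i))"] b by auto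
  qed simp
qed

lemma fs_independent_imp_independent_columns:
  assumes inj: "inj_on (\<lambda>i. mat_column l M (idx i)) {..<k}"
    and indep: "fs.independent ((\<lambda>i. mat_column l M (idx i)) ` {..<k})"
  shows "independent_columns l k idx M"
proof (rule independent_columnsI)
  fix y i assume y: "\<And>p. p < l \<Longrightarrow> (\<Sum>i<k. y i * M p (idx i)) = 0" and "i < k"
  let ?col = "\<lambda>i. mat_column l M (idx i)"
  define u where "u b = y (inv_into {..<k} ?col b)" for b
  have "(\<Sum>b\<in>?col ` {..<k}. fscale (u b) b) = (\<Sum>i<k. fscale (u (?col i)) (?col i))"
    using inj by (simp add: sum.reindex)
  also have "\<dots> = (\<Sum>i<k. fscale (y i) (?col i))"
    by (intro sum.cong) (simp_all add: u_def inv_into_f_f[OF inj])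
  also have "\<dots> = 0"
    using y by (auto simp: fun_eq_iff sum_fscale_column_apply)
  finally have "u (?col i) = 0"
    using \<open>i < k\<close> by (intro fs.independentD[OF indep]) auto
  then show "y i = 0"
    using \<open>i < k\<close> by (simp add: u_def inv_into_f_f[OF inj])
qed

lemma basic_columns_exist:
  fixes M :: "nat \<Rightarrow> nat \<Rightarrow> real"
  assumes "mat_rank l n M = k"
  obtains idx where "\<And>i. i < k \<Longrightarrow> idx i < n" "inj_on idx {..<k}" "independent_columns l k idx M"
proof -
  let ?col = "mat_column l M"
  obtain Bc where Bc: "Bc \<subseteq> ?col ` {..<n}" "fs.independent Bc" "card Bc = k"
    using assms unfolding mat_rank_eq_dim_columns by (metis fs.basis_exists)
  have "finite Bc"
    using Bc(1) finite_surj by blast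
  then obtain h where h: "bij_betw h {..<k} Bc"
    using Bc(3) ex_bij_betw_nat_finite atLeast0LessThan by metis
  define idx where "idx i = inv_into {..<n} ?col (h i)" for i
  have h_col: "h i \<in> ?col ` {..<n}" if "i < k" for i
    using h Bc(1) that by (auto simp: bij_betw_def)
  have col_idx: "?col (idx i) = h i" and idx_less: "idx i < n" if "i < k" for i
    using f_inv_into_f[OF h_col[OF that]] inv_into_into[OF h_col[OF that]] by (simp_all add: idx_def)
  have inj: "inj_on (\<lambda>i. ?col (idx i)) {..<k}"
    using h inj_on_cong[of "{..<k}" "\<lambda>i. ?col (idx i)" h] col_idx by (simp add: bij_betw_def)
  have "(\<lambda>i. ?col (idx i)) ` {..<k} = h ` {..<k}"
    by (rule image_cong) (simp_all add: col_idx)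
  also have "\<dots> = Bc"
    using h by (simp add: bij_betw_def)
  finally have "(\<lambda>i. ?col (idx i)) ` {..<k} = Bc" .
  then have "independent_columns l k idx M"
    using fs_independent_imp_independent_columns[OF inj] Bc(2) by simp
  moreover have "inj_on idx {..<k}"
    using inj by (rule inj_on_imageI2[of ?col, unfolded comp_def])
  ultimately show thesis
    using that idx_less by blast
qed

lemma column_in_span_basic_columns:
  assumes idx_less: "\<And>i. i < k \<Longrightarrow> idx i < n"
    and indep: "independent_columns l k idx M"
    and rank: "mat_rank l n M = k" and "j < n"
  obtains y where "\<And>p. p < l \<Longrightarrow> M p j = (\<Sum>i<k. y i * M p (idx i))"
proof -
  let ?Bc = "(\<lambda>i. mat_column l M (idx i)) ` {..<k}"
  note basic = independent_columns_imp_fs_independent[OF indep]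
  have "mat_column l M ` {..<n} \<subseteq> fs.span ?Bc"
  proof (rule fs.independent_card_dim_spanning)
    show "?Bc \<subseteq> mat_column l M ` {..<n}"
      using idx_less by auto
    show "card ?Bc = fs.dim (mat_column l M ` {..<n})"
      using basic(1) rank by (simp add: card_image mat_rank_eq_dim_columns)
  qed (simp_all add: basic(2))
  then obtain u where "mat_column l M j = (\<Sum>b\<in>?Bc. fscale (u b) b)"
    using \<open>j < n\<close> by (auto simp: fs.span_finite)
  then have eq: "mat_column l M j = (\<Sum>i<k. fscale (u (mat_column l M (idx i))) (mat_column l M (idx i)))"
    using basic(1) by (simp add: sum.reindex)
  show thesis
  proof (rule that)
    fix p assume "p < l"
    have "mat_column l M j p = (\<Sum>i<k. u (mat_column l M (idx i)) * M p (idx i))"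
      using \<open>p < l\<close> unfolding eq sum_fscale_column_apply by simp
    then show "M p j = (\<Sum>i<k. u (mat_column l M (idx i)) * M p (idx i))"
      using \<open>p < l\<close> by (simp add: mat_column_def)
  qed
qed

lemma gram_inverse_solve:
  fixes M Gi :: "nat \<Rightarrow> nat \<Rightarrow> real"
  assumes left_inv: "\<And>i i'. i < k \<Longrightarrow> i' < k \<Longrightarrow>
      (\<Sum>j<k. Gi i j * (\<Sum>p<l. M p (idx j) * M p (idx i'))) = (if i = i' then 1 else 0)"
    and "i < k"
  shows "(\<Sum>i'<k. Gi i i' * (\<Sum>p<l. M p (idx i') * (\<Sum>i''<k. M p (idx i'') * y i''))) = y i"
proof -
  have inner: "(\<Sum>p<l. M p (idx i') * (\<Sum>i''<k. M p (idx i'') * y i''))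
      = (\<Sum>i''<k. (\<Sum>p<l. M p (idx i') * M p (idx i'')) * y i'')" for i'
    by (rule sum_mult_sum_swap)
  have "(\<Sum>i'<k. Gi i i' * (\<Sum>p<l. M p (idx i') * (\<Sum>i''<k. M p (idx i'') * y i'')))
      = (\<Sum>i'<k. Gi i i' * (\<Sum>i''<k. (\<Sum>p<l. M p (idx i') * M p (idx i'')) * y i''))"
    by (simp only: inner)
  also have "\<dots> = (\<Sum>i''<k. (\<Sum>i'<k. Gi i i' * (\<Sum>p<l. M p (idx i') * M p (idx i''))) * y i'')"
    by (rule sum_mult_sum_swap)
  also have "\<dots> = (\<Sum>i''<k. if i'' = i then y i else 0)"
    using left_inv[OF \<open>i < k\<close>] by (intro sum.cong) auto
  also have "\<dots> = y i"
    using \<open>i < k\<close> by simp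
  finally show ?thesis .
qed

lemma basic_rows_surj_of_gram_inverse:
  fixes M Gi :: "nat \<Rightarrow> nat \<Rightarrow> real"
  assumes right_inv: "\<And>i i'. i < k \<Longrightarrow> i' < k \<Longrightarrow>
      (\<Sum>j<k. (\<Sum>p<l. M p (idx i) * M p (idx j)) * Gi j i') = (if i = i' then 1 else 0)"
  shows "\<exists>\<mu>\<in>rvec l. \<forall>i<k. (\<Sum>p<l. M p (idx i) * \<mu> p) = y i"
proof
  define w where "w j = (\<Sum>i'<k. Gi j i' * y i')" for j
  define \<mu> where "\<mu> p = (if p < l then (\<Sum>j<k. M p (idx j) * w j) else 0)" for p
  show "\<mu> \<in> rvec l"
    by (simp add: \<mu>_def rvec_def)
  show "\<forall>i<k. (\<Sum>p<l. M p (idx i) * \<mu> p) = y i"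
  proof (intro allI impI)
    fix i assume "i < k"
    have "(\<Sum>p<l. M p (idx i) * \<mu> p) = (\<Sum>j<k. (\<Sum>p<l. M p (idx i) * M p (idx j)) * w j)"
      by (simp add: \<mu>_def sum_mult_sum_swap)
    also have "\<dots> = (\<Sum>i'<k. (\<Sum>j<k. (\<Sum>p<l. M p (idx i) * M p (idx j)) * Gi j i') * y i')"
      unfolding w_def by (rule sum_mult_sum_swap)
    also have "\<dots> = (\<Sum>i'<k. if i' = i then y i else 0)"
      using right_inv[OF \<open>i < k\<close>] by (intro sum.cong) auto
    finally show "(\<Sum>p<l. M p (idx i) * \<mu> p) = y i"
      using \<open>i < k\<close> by simp
  qed
qed

lemma column_basis_of_gram_inverse:
  fixes M Gi :: "nat \<Rightarrow> nat \<Rightarrow> real"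
  assumes idx_less: "\<And>i. i < k \<Longrightarrow> idx i < n" and inj_idx: "inj_on idx {..<k}"
    and left_inv: "\<And>i i'. i < k \<Longrightarrow> i' < k \<Longrightarrow>
      (\<Sum>j<k. Gi i j * (\<Sum>p<l. M p (idx j) * M p (idx i'))) = (if i = i' then 1 else 0)"
    and right_inv: "\<And>i i'. i < k \<Longrightarrow> i' < k \<Longrightarrow>
      (\<Sum>j<k. (\<Sum>p<l. M p (idx i) * M p (idx j)) * Gi j i') = (if i = i' then 1 else 0)"
    and rank: "mat_rank l n M = k"
  shows "column_basis n l k idx M (\<lambda>i j. \<Sum>i'<k. Gi i i' * (\<Sum>p<l. M p (idx i') * M p j))"
proof
  have solve: "(\<Sum>i'<k. Gi i i' * (\<Sum>p<l. M p (idx i') * (\<Sum>i''<k. M p (idx i'') * y i''))) = y i"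
    if "i < k" for i y
    by (rule gram_inverse_solve[OF _ that]) (rule left_inv)
  show indep: "independent_columns l k idx M"
  proof (rule independent_columnsI)
    fix y i assume "\<And>p. p < l \<Longrightarrow> (\<Sum>i<k. y i * M p (idx i)) = 0" "i < k"
    then show "y i = 0"
      using solve[OF \<open>i < k\<close>, of y] by (simp add: mult.commute)
  qed
  show "M p j = (\<Sum>i<k. (\<Sum>i'<k. Gi i i' * (\<Sum>p<l. M p (idx i') * M p j)) * M p (idx i))"
    if "j < n" "p < l" for j p
  proof -
    obtain y where y: "\<And>p. p < l \<Longrightarrow> M p j = (\<Sum>i<k. y i * M p (idx i))"
      using column_in_span_basic_columns[OF idx_less indep rank \<open>j < n\<close>] by blast
    have "(\<Sum>i'<k. Gi i i' * (\<Sum>p<l. M p (idx i') * M p j)) = y i" if "i < k" for i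
      using solve[OF that, of y] by (simp add: y mult.commute)
    then show ?thesis
      using y[OF \<open>p < l\<close>] by simp
  qed
  show "\<exists>\<mu>\<in>rvec l. \<forall>i<k. (\<Sum>p<l. M p (idx i) * \<mu> p) = y i" for y
    by (rule basic_rows_surj_of_gram_inverse) (rule right_inv)
qed (use idx_less inj_idx in simp_all)

definition gram_mat :: "nat \<Rightarrow> nat \<Rightarrow> (nat \<Rightarrow> nat) \<Rightarrow> (nat \<Rightarrow> nat \<Rightarrow> real) \<Rightarrow> real mat" where
  "gram_mat l k idx M = Matrix.mat k k (\<lambda>(i, j). \<Sum>p<l. M p (idx i) * M p (idx j))"

lemma gram_mat_carrier: "gram_mat l k idx M \<in> carrier_mat k k"
  and gram_mat_index:
    "i < k \<Longrightarrow> j < k \<Longrightarrow> gram_mat l k idx M $$ (i, j) = (\<Sum>p<l. M p (idx i) * M p (idx j))"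
  by (simp_all add: gram_mat_def)

lemma det_gram_mat_nonzero:
  assumes "independent_columns l k idx M"
  shows "Determinant.det (gram_mat l k idx M) \<noteq> 0"
proof
  assume "Determinant.det (gram_mat l k idx M) = 0"
  then obtain y where "\<exists>i<k. y i \<noteq> 0"
    and ker: "\<And>i. i < k \<Longrightarrow> (\<Sum>j<k. gram_mat l k idx M $$ (i, j) * y j) = 0"
    using det_eq_0_imp_kernel[OF gram_mat_carrier] by blast
  define z where "z p = (\<Sum>i<k. M p (idx i) * y i)" for p
  have gram_z: "(\<Sum>j<k. gram_mat l k idx M $$ (i, j) * y j) = (\<Sum>p<l. M p (idx i) * z p)"
    if "i < k" for i
    using that by (simp add: gram_mat_index z_def sum_mult_sum_swap)
  have "(\<Sum>p<l. z p * z p) = (\<Sum>p<l. (\<Sum>i<k. y i * M p (idx i)) * z p)"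
    by (simp add: z_def mult.commute)
  also have "\<dots> = (\<Sum>i<k. y i * (\<Sum>p<l. M p (idx i) * z p))"
    by (rule sum_mult_sum_swap[symmetric])
  also have "\<dots> = 0"
    by (rule sum.neutral) (simp add: gram_z[symmetric] ker)
  finally have "\<forall>p\<in>{..<l}. z p * z p = 0"
    by (subst (asm) sum_nonneg_eq_0_iff) auto
  then have "\<And>p. p < l \<Longrightarrow> (\<Sum>i<k. y i * M p (idx i)) = 0"
    by (simp add: z_def mult.commute)
  then have "\<forall>i<k. y i = 0"
    using independent_columnsD[OF assms] by blast
  with \<open>\<exists>i<k. y i \<noteq> 0\<close> show False
    by blast
qed

definition gram_coeffs :: "nat \<Rightarrow> nat \<Rightarrow> (nat \<Rightarrow> nat) \<Rightarrow> (nat \<Rightarrow> nat \<Rightarrow> real) \<Rightarrow> nat \<Rightarrow> nat \<Rightarrow> real"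
  where "gram_coeffs l k idx M i j = (\<Sum>i'<k. adj_mat (gram_mat l k idx M) $$ (i, i')
    / Determinant.det (gram_mat l k idx M) * (\<Sum>p<l. M p (idx i') * M p j))"

lemma column_basis_of_gram:
  fixes M :: "nat \<Rightarrow> nat \<Rightarrow> real"
  assumes idx: "\<And>i. i < k \<Longrightarrow> idx i < n" "inj_on idx {..<k}"
    and det: "Determinant.det (gram_mat l k idx M) \<noteq> 0" and rank: "mat_rank l n M = k"
  shows "column_basis n l k idx M (gram_coeffs l k idx M)"
  unfolding gram_coeffs_def[abs_def]
proof (rule column_basis_of_gram_inverse[OF idx _ _ rank])
  note inverse = adj_mat_div_det_inverse[OF gram_mat_carrier det]
  show "(\<Sum>j<k. adj_mat (gram_mat l k idx M) $$ (i, j) / Determinant.det (gram_mat l k idx M)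
      * (\<Sum>p<l. M p (idx j) * M p (idx i'))) = (if i = i' then 1 else 0)"
    if "i < k" "i' < k" for i i'
    using inverse(1)[OF that] that by (simp add: gram_mat_index)
  show "(\<Sum>j<k. (\<Sum>p<l. M p (idx i) * M p (idx j))
      * (adj_mat (gram_mat l k idx M) $$ (j, i') / Determinant.det (gram_mat l k idx M)))
      = (if i = i' then 1 else 0)"
    if "i < k" "i' < k" for i i'
    using inverse(2)[OF that] that by (simp add: gram_mat_index)
qed

lemma continuous_on_det_gram_mat:
  fixes A :: "'a::topological_space \<Rightarrow> nat \<Rightarrow> nat \<Rightarrow> real"
  assumes "\<And>p j. p < l \<Longrightarrow> j < n \<Longrightarrow> continuous_on V (\<lambda>r. A r p j)"
    and "\<And>i. i < k \<Longrightarrow> idx i < n"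
  shows "continuous_on V (\<lambda>r. Determinant.det (gram_mat l k idx (A r)))"
    and "i < k \<Longrightarrow> i' < k \<Longrightarrow> continuous_on V (\<lambda>r. adj_mat (gram_mat l k idx (A r)) $$ (i, i'))"
proof -
  have G: "continuous_on V (\<lambda>r. gram_mat l k idx (A r) $$ (i, j))" if "i < k" "j < k" for i j
    using that assms by (auto simp: gram_mat_index intro!: continuous_intros)
  show "continuous_on V (\<lambda>r. Determinant.det (gram_mat l k idx (A r)))"
    using gram_mat_carrier G by (rule continuous_on_det)
  show "continuous_on V (\<lambda>r. adj_mat (gram_mat l k idx (A r)) $$ (i, i'))" if "i < k" "i' < k"
    using gram_mat_carrier G that by (rule continuous_on_adj_mat)
qed

lemma continuous_on_gram_coeffs:
  fixes A :: "'a::topological_space \<Rightarrow> nat \<Rightarrow> nat \<Rightarrow> real"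
  assumes A: "\<And>p j. p < l \<Longrightarrow> j < n \<Longrightarrow> continuous_on V (\<lambda>r. A r p j)"
    and idx: "\<And>i. i < k \<Longrightarrow> idx i < n"
    and det: "\<And>r. r \<in> V \<Longrightarrow> Determinant.det (gram_mat l k idx (A r)) \<noteq> 0"
    and "i < k" "j < n"
  shows "continuous_on V (\<lambda>r. gram_coeffs l k idx (A r) i j)"
proof -
  note G = continuous_on_det_gram_mat[OF A idx]
  have "continuous_on V (\<lambda>r. adj_mat (gram_mat l k idx (A r)) $$ (i, i')
      / Determinant.det (gram_mat l k idx (A r)))" if "i' < k" for i'
    using \<open>i < k\<close> that det by (intro continuous_on_divide G) auto
  then show ?thesis
    using A idx \<open>j < n\<close> unfolding gram_coeffs_def
    by (intro continuous_on_sum continuous_on_mult) auto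
qed

lemma local_column_basis:
  fixes A :: "(nat \<Rightarrow> real) \<Rightarrow> nat \<Rightarrow> nat \<Rightarrow> real"
  assumes U: "openin (top_of_set (rvec n)) U"
    and A: "\<And>i j. i < l \<Longrightarrow> j < n \<Longrightarrow> continuous_on U (\<lambda>r. A r i j)"
    and rank: "\<And>r. r \<in> U \<Longrightarrow> mat_rank l n (A r) = k"
    and "x \<in> U"
  obtains V C idx where "openin (top_of_set (rvec n)) V" "x \<in> V" "V \<subseteq> U"
    "\<And>i j. i < k \<Longrightarrow> j < n \<Longrightarrow> continuous_on V (\<lambda>r. C r i j)"
    "\<And>r. r \<in> V \<Longrightarrow> column_basis n l k idx (A r) (C r)"
proof -
  obtain idx where idx: "\<And>i. i < k \<Longrightarrow> idx i < n" "inj_on idx {..<k}"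
    and indep: "independent_columns l k idx (A x)"
    using basic_columns_exist[OF rank[OF \<open>x \<in> U\<close>]] by blast
  define V where "V = U \<inter> (\<lambda>r. Determinant.det (gram_mat l k idx (A r))) -` (- {0})"
  have "V \<subseteq> U"
    by (simp add: V_def)
  have "openin (top_of_set U) V"
    unfolding V_def using continuous_on_det_gram_mat(1)[OF A idx(1)]
    by (rule continuous_openin_preimage_gen) auto
  then have "openin (top_of_set (rvec n)) V"
    using U by (rule openin_trans)
  moreover have "x \<in> V"
    using det_gram_mat_nonzero[OF indep] \<open>x \<in> U\<close> by (simp add: V_def)
  moreover note \<open>V \<subseteq> U\<close>
  moreover have "continuous_on V (\<lambda>r. gram_coeffs l k idx (A r) i j)" if "i < k" "j < n" for i j
    by (rule continuous_on_gram_coeffs[OF continuous_on_subset[OF A \<open>V \<subseteq> U\<close>] idx(1) _ that])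
      (auto simp: V_def)
  moreover have "column_basis n l k idx (A r) (gram_coeffs l k idx (A r))" if "r \<in> V" for r
    using that rank by (intro column_basis_of_gram[OF idx]) (auto simp: V_def)
  ultimately show thesis
    by (rule that)
qed

theorem proposition1:
  fixes n m l :: nat
    and U :: "(nat \<Rightarrow> real) set"
    and A B :: "(nat \<Rightarrow> real) \<Rightarrow> nat \<Rightarrow> nat \<Rightarrow> real"
  assumes "U \<subseteq> rvec n"
    and "openin (top_of_set (rvec n)) U"
    and "\<forall>i<l. \<forall>j<n. continuous_on U (\<lambda>r. A r i j)"
    and "\<forall>i<n. \<forall>j<m. continuous_on U (\<lambda>r. B r i j)"
    and "\<exists>k. \<forall>r\<in>U. mat_rank l n (A r) = k"
  shows "modulated_dirac n (3*n+m) U (Dpos n m l A B)"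
  unfolding modulated_dirac_def
proof
  fix x assume "x \<in> U"
  obtain k where rank: "\<And>r. r \<in> U \<Longrightarrow> mat_rank l n (A r) = k"
    using assms(5) by blast
  have A: "\<And>i j. i < l \<Longrightarrow> j < n \<Longrightarrow> continuous_on U (\<lambda>r. A r i j)"
    using assms(3) by blast
  obtain V C idx where V: "openin (top_of_set (rvec n)) V" "x \<in> V" "V \<subseteq> U"
    and C: "\<And>i j. i < k \<Longrightarrow> j < n \<Longrightarrow> continuous_on V (\<lambda>r. C r i j)"
    and basis: "\<And>r. r \<in> V \<Longrightarrow> column_basis n l k idx (A r) (C r)"
    using local_column_basis[OF assms(2) A rank \<open>x \<in> U\<close>] by blast
  have B: "continuous_on V (\<lambda>r. B r i j)" if "i < n" "j < m" for i j
    using assms(4) that by (blast intro: continuous_on_subset[OF _ V(3)])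
  have "dirac (3*n+m) (Dpos n m l A B x)"
    using column_basis.orth_ker_in_row_space[OF basis[OF \<open>x \<in> V\<close>]] by (rule dirac_Dpos)
  moreover have "\<forall>y\<in>V. lin_bij_onto (3*n+m) (dirac_param n m k idx (C y) (B y)) (Dpos n m l A B y)"
    using column_basis.lin_bij_onto_dirac_param[OF basis] by blast
  moreover have "continuous_on V (\<lambda>y. dirac_param n m k idx (C y) (B y) z)" for z
    using C B by (rule continuous_on_dirac_param)
  ultimately show "dirac (3*n+m) (Dpos n m l A B x) \<and>
      (\<exists>Ux T. openin (top_of_set (rvec n)) Ux \<and> x \<in> Ux \<and> Ux \<subseteq> U \<and>
        (\<forall>y\<in>Ux. lin_bij_onto (3*n+m) (T y) (Dpos n m l A B y)) \<and>
        (\<forall>z\<in>rvec (3*n+m). continuous_on Ux (\<lambda>y. T y z)))"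
    using V by (intro conjI exI[where x = V] exI[where x = "\<lambda>y. dirac_param n m k idx (C y) (B y)"])
      simp_all
qed

end
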